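(* Let $(V,C,[p_{i,c}],k)$ be an ABC instance under the Candidate-Probability model with $0<p_{i,c}<1$ for all voters $i\in V$ and all candidates $c\in C$. Then a committee $W\subseteq C$ with $|W|=k$ satisfies JR with respect to every plausible approval profile if and only if $W=C$ and $k=|C|$.
   Context: An ABC instance consists of voters $V=[n]$, candidates $C=[m]$, an approval profile $A=(A_1,\dots,A_n)$ with $A_i\subseteq C$, and a positive integer $k$. A committee is a set $W\subseteq C$ with $|W|=k$. $W$ satisfies justified representation (JR) with respect to $A$ if for every $V'\subseteq V$ with $|V'|\ge \frac{n}{k}$ and $\bigcap_{i\in V'}A_i\neq\emptyset$, there is $i\in V'$ with $A_i\cap W\neq\emptyset$. In the Candidate-Probability model each voter $i$ approves each candidate $c$ independently with probability $p_{i,c}$. A plausible approval profile is one with positive probability. *)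

theory Defs
  imports Main "HOL-Analysis.Analysis"
begin

definition JR :: "'v set \<Rightarrow> ('v \<Rightarrow> 'c set) \<Rightarrow> nat \<Rightarrow> 'c set \<Rightarrow> bool" where
  "JR V A k W \<longleftrightarrow>
     (\<forall>V'. V' \<subseteq> V \<longrightarrow> real (card V') \<ge> real (card V) / real k \<longrightarrow>
        (\<Inter>i\<in>V'. A i) \<noteq> {} \<longrightarrow> (\<exists>i\<in>V'. A i \<inter> W \<noteq> {}))"

definition profile_prob :: "'v set \<Rightarrow> 'c set \<Rightarrow> ('v \<Rightarrow> 'c \<Rightarrow> real) \<Rightarrow> ('v \<Rightarrow> 'c set) \<Rightarrow> real" where
  "profile_prob V C p A =
     (\<Prod>i\<in>V. \<Prod>c\<in>C. if c \<in> A i then p i c else 1 - p i c)"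

definition plausible :: "'v set \<Rightarrow> 'c set \<Rightarrow> ('v \<Rightarrow> 'c \<Rightarrow> real) \<Rightarrow> ('v \<Rightarrow> 'c set) \<Rightarrow> bool" where
  "plausible V C p A \<longleftrightarrow> (\<forall>i\<in>V. A i \<subseteq> C) \<and> profile_prob V C p A > 0"

end

theory Submission
  imports Defs
begin

text \<open>With all approval probabilities strictly between 0 and 1, every profile whose ballots lie
in C is plausible. If some candidate c of C is missing from W, the profile in which every voter
approves exactly c is therefore plausible, and the whole electorate is a cohesive group left
unrepresented. Conversely, if W = C then every nonempty ballot meets W, and a group large enough
to claim representation is nonempty.\<close>

lemma plausible_iff_ballots_subset:
  assumes "\<And>i c. i \<in> V \<Longrightarrow> c \<in> C \<Longrightarrow> 0 < p i c \<and> p i c < 1"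
  shows "plausible V C p A \<longleftrightarrow> (\<forall>i\<in>V. A i \<subseteq> C)"
proof -
  have "profile_prob V C p A > 0"
    unfolding profile_prob_def by (intro prod_pos) (use assms in auto)
  then show ?thesis
    unfolding plausible_def by blast
qed

lemma not_JR_unanimous_singleton:
  assumes "V \<noteq> {}" and "c \<notin> W"
  shows "\<not> JR V (\<lambda>_. {c}) k W"
proof -
  have "real (card V) / real k \<le> real (card V)"
    by (cases "k = 0") (auto simp: divide_le_eq mult_le_cancel_left1)
  moreover have "(\<Inter>i\<in>V. {c}) \<noteq> {}"
    using assms(1) by auto
  ultimately show ?thesis
    using assms(2) unfolding JR_def by blast
qed

lemma JR_if_ballots_subset_committee:
  assumes "finite V" and "V \<noteq> {}" and "k > 0" and "\<forall>i\<in>V. A i \<subseteq> W"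
  shows "JR V A k W"
  unfolding JR_def
proof (intro allI impI)
  fix V' assume "V' \<subseteq> V" and large: "real (card V) / real k \<le> real (card V')"
    and cohesive: "(\<Inter>i\<in>V'. A i) \<noteq> {}"
  have "real (card V) / real k > 0"
    using assms(1-3) by (simp add: card_gt_0_iff)
  with large obtain i where "i \<in> V'"
    by fastforce
  moreover from this cohesive have "A i \<noteq> {}"
    by blast
  ultimately show "\<exists>i\<in>V'. A i \<inter> W \<noteq> {}"
    using \<open>V' \<subseteq> V\<close> assms(4) by blast
qed

theorem lemma2:
  fixes V :: "'v set" and C :: "'c set" and p :: "'v \<Rightarrow> 'c \<Rightarrow> real"
    and k :: nat and W :: "'c set"
  assumes "finite V" and "V \<noteq> {}" and "finite C" and "k > 0"
    and "\<And>i c. i \<in> V \<Longrightarrow> c \<in> C \<Longrightarrow> 0 < p i c \<and> p i c < 1"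
    and "W \<subseteq> C" and "card W = k"
  shows "(\<forall>A. plausible V C p A \<longrightarrow> JR V A k W) \<longleftrightarrow> (W = C \<and> k = card C)"
proof
  assume JR_all: "\<forall>A. plausible V C p A \<longrightarrow> JR V A k W"
  have "W = C"
  proof (rule ccontr)
    assume "W \<noteq> C"
    with assms(6) obtain c where "c \<in> C" and "c \<notin> W"
      by blast
    then have "plausible V C p (\<lambda>_. {c})"
      using plausible_iff_ballots_subset[of V C p, OF assms(5)] by simp
    with JR_all not_JR_unanimous_singleton[OF assms(2) \<open>c \<notin> W\<close>] show False
      by blast
  qed
  with assms(7) show "W = C \<and> k = card C"
    by simp
next
  assume "W = C \<and> k = card C"
  then show "\<forall>A. plausible V C p A \<longrightarrow> JR V A k W"
    using JR_if_ballots_subset_committee[OF assms(1,2,4)] plausible_iff_ballots_subset[of V C p, OF assms(5)]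
    by blast
qed

end
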